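(* Let $N\in\mathbb{Z}^+$ and $\boldsymbol{\mu}\in\mathbb{R}_+^N$ with $0\le\mu[n]\le1$ for all $n$, and suppose $t=\sum_{n=1}^N\mu[n]\ge1$ is not an integer. Define $m_1[n]=\big[\mu[n]-(t-\lfloor t\rfloor)\big]^+$, $m_2[n]=\big[\mu[n]-(\lceil t\rceil-t)\big]^+$ and $$r=\frac{\lfloor t\rfloor(\lceil t\rceil-t)-\sum_{n=1}^N m_1[n]}{t-\sum_{n=1}^N m_1[n]-\sum_{n=1}^N m_2[n]}.$$ Then $r$ is well defined (the denominator is strictly positive) and $0\le r<1$.
   Context: $[x]^+=\max(x,0)$. *)

theory Defs
  imports Complex_Main
begin

definition pospart :: "real \<Rightarrow> real" where
  "pospart x = max x 0"

end

theory Submission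
  imports Defs
begin

(* Write t = K + f with K = floor t and 0 < f < 1, so that the two thresholds are f and 1 - f.
   If a of the weights exceed a threshold c, the positive parts [mu n - c]^+ sum to at most
   a (1 - c), and also to at most t - a c.  Splitting on a <= K or a >= K + 1 bounds those for
   c = f by K (1 - f), which is r >= 0, and those for c = 1 - f strictly by (K + 1) f, which is
   r < 1.  The denominator is the sum of the terms mu n - [mu n - f]^+ - [mu n - (1 - f)]^+,
   each the least of mu n, 1 - mu n, f and 1 - f; it is positive because t is not an integer,
   so some mu n lies strictly between 0 and 1. *)

lemma diff_pospart_pospart_eq_min:
  fixes x c :: real
  shows "x - pospart (x - c) - pospart (x - (1 - c)) = min (min x (1 - x)) (min c (1 - c))"
  unfolding pospart_def by (auto simp: min_def max_def)

lemma sum_pospart_eq_sum_above: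
  fixes x :: "'a \<Rightarrow> real"
  assumes "finite I"
  shows "(\<Sum>i\<in>I. pospart (x i - c)) = (\<Sum>i\<in>{i\<in>I. c < x i}. x i - c)"
proof -
  have "(\<Sum>i\<in>I. pospart (x i - c)) = (\<Sum>i\<in>{i\<in>I. c < x i}. pospart (x i - c))"
    using assms by (intro sum.mono_neutral_right) (auto simp: pospart_def)
  also have "\<dots> = (\<Sum>i\<in>{i\<in>I. c < x i}. x i - c)"
    by (intro sum.cong) (auto simp: pospart_def)
  finally show ?thesis .
qed

lemma sum_pospart_le_max:
  fixes x :: "'a \<Rightarrow> real"
  assumes "finite I" and x01: "\<And>i. i \<in> I \<Longrightarrow> 0 \<le> x i \<and> x i \<le> 1"
    and "0 \<le> c" "c \<le> 1"
  shows "(\<Sum>i\<in>I. pospart (x i - c)) \<le> max (real k * (1 - c)) ((\<Sum>i\<in>I. x i) - real (k + 1) * c)"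
proof -
  define A where "A = {i\<in>I. c < x i}"
  have A: "A \<subseteq> I" "finite A"
    using \<open>finite I\<close> by (auto simp: A_def)
  have S: "(\<Sum>i\<in>I. pospart (x i - c)) = (\<Sum>i\<in>A. x i - c)"
    unfolding A_def using \<open>finite I\<close> by (rule sum_pospart_eq_sum_above)
  have by_count: "(\<Sum>i\<in>A. x i - c) \<le> real (card A) * (1 - c)"
    using sum_mono[of A "\<lambda>i. x i - c" "\<lambda>_. 1 - c"] A x01 by force
  have "(\<Sum>i\<in>A. x i) \<le> (\<Sum>i\<in>I. x i)"
    using A x01 \<open>finite I\<close> by (intro sum_mono2) auto
  then have by_total: "(\<Sum>i\<in>A. x i - c) \<le> (\<Sum>i\<in>I. x i) - real (card A) * c"
    by (simp add: sum_subtractf)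
  show ?thesis
  proof (cases "card A \<le> k")
    case True
    then have "real (card A) * (1 - c) \<le> real k * (1 - c)"
      using \<open>c \<le> 1\<close> by (intro mult_right_mono) auto
    then show ?thesis using S by_count by linarith
  next
    case False
    then have "real (k + 1) * c \<le> real (card A) * c"
      using \<open>0 \<le> c\<close> by (intro mult_right_mono) auto
    then show ?thesis using S by_total by linarith
  qed
qed

lemma exists_strictly_between_0_1_if_sum_notin_Ints:
  fixes x :: "'a \<Rightarrow> real"
  assumes "\<And>i. i \<in> I \<Longrightarrow> 0 \<le> x i \<and> x i \<le> 1" and "(\<Sum>i\<in>I. x i) \<notin> \<int>"
  shows "\<exists>i\<in>I. 0 < x i \<and> x i < 1"
proof (rule ccontr)
  assume "\<not> ?thesis"
  then have "\<And>i. i \<in> I \<Longrightarrow> x i \<in> \<int>"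
    using assms(1) by (metis Ints_0 Ints_1 linorder_not_le order_antisym_conv)
  then have "(\<Sum>i\<in>I. x i) \<in> \<int>" by (rule Ints_sum)
  with assms(2) show False ..
qed

lemma sum_diff_pospart_pospart_pos:
  fixes x :: "'a \<Rightarrow> real"
  assumes "finite I" and x01: "\<And>i. i \<in> I \<Longrightarrow> 0 \<le> x i \<and> x i \<le> 1"
    and "(\<Sum>i\<in>I. x i) \<notin> \<int>" and "0 < c" "c < 1"
  shows "0 < (\<Sum>i\<in>I. x i) - (\<Sum>i\<in>I. pospart (x i - c)) - (\<Sum>i\<in>I. pospart (x i - (1 - c)))"
proof -
  define h where "h i = min (min (x i) (1 - x i)) (min c (1 - c))" for i
  have "(\<Sum>i\<in>I. x i) - (\<Sum>i\<in>I. pospart (x i - c)) - (\<Sum>i\<in>I. pospart (x i - (1 - c)))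
      = (\<Sum>i\<in>I. h i)"
    by (simp add: h_def sum_subtractf diff_pospart_pospart_eq_min [symmetric])
  moreover obtain j where "j \<in> I" "0 < x j" "x j < 1"
    using exists_strictly_between_0_1_if_sum_notin_Ints[OF x01 assms(3)] by blast
  then have "0 < (\<Sum>i\<in>I. h i)"
    using assms x01 by (intro sum_pos2[of I j]) (auto simp: h_def)
  ultimately show ?thesis by simp
qed

theorem lemma5:
  fixes N :: nat and \<mu> :: "nat \<Rightarrow> real" and t :: real
  assumes "N \<ge> 1"
    and "\<And>n. n \<in> {1..N} \<Longrightarrow> 0 \<le> \<mu> n \<and> \<mu> n \<le> 1"
    and "t = (\<Sum>n=1..N. \<mu> n)"
    and "t \<ge> 1"
    and "t \<notin> \<int>"
  shows "let m1 = (\<lambda>n. pospart (\<mu> n - (t - of_int \<lfloor>t\<rfloor>)));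
             m2 = (\<lambda>n. pospart (\<mu> n - (of_int \<lceil>t\<rceil> - t)));
             den = t - (\<Sum>n=1..N. m1 n) - (\<Sum>n=1..N. m2 n);
             r = (of_int \<lfloor>t\<rfloor> * (of_int \<lceil>t\<rceil> - t) - (\<Sum>n=1..N. m1 n)) / den
         in den > 0 \<and> 0 \<le> r \<and> r < 1"
proof -
  define k where "k = nat \<lfloor>t\<rfloor>"
  let ?f = "t - real k"
  let ?S1 = "\<Sum>n=1..N. pospart (\<mu> n - ?f)"
  let ?S2 = "\<Sum>n=1..N. pospart (\<mu> n - (1 - ?f))"
  have floor_eq: "of_int \<lfloor>t\<rfloor> = real k"
    using \<open>t \<ge> 1\<close> by (simp add: k_def)
  have t_not_floor: "t \<noteq> of_int \<lfloor>t\<rfloor>"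
    using \<open>t \<notin> \<int>\<close> by (metis Ints_of_int)
  then have ceiling_eq: "of_int \<lceil>t\<rceil> - t = 1 - ?f"
    by (simp add: ceiling_altdef floor_eq)
  have f: "0 < ?f" "?f < 1"
    using t_not_floor of_int_floor_le[of t] real_of_int_floor_add_one_gt[of t]
    unfolding floor_eq by linarith+
  have den: "0 < t - ?S1 - ?S2"
    using sum_diff_pospart_pospart_pos[of "{1..N}" \<mu> ?f] assms(2,3,5) f by simp
  have "?S1 \<le> max (real k * (1 - ?f)) (t - real (k + 1) * ?f)"
    using sum_pospart_le_max[of "{1..N}" \<mu> ?f k] assms(2,3) f by simp
  moreover have "t - real (k + 1) * ?f = real k * (1 - ?f)"
    by (simp add: algebra_simps)
  ultimately have num_nonneg: "?S1 \<le> real k * (1 - ?f)"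
    by simp
  have "?S2 \<le> max (real k * ?f) (t - real (k + 1) * (1 - ?f))"
    using sum_pospart_le_max[of "{1..N}" \<mu> "1 - ?f" k] assms(2,3) f by simp
  moreover have "real k * ?f < t - real k * (1 - ?f)"
    using f by (simp add: algebra_simps)
  moreover have "t - real (k + 1) * (1 - ?f) < t - real k * (1 - ?f)"
    using f by (simp add: algebra_simps)
  ultimately have num_lt_den: "?S2 < t - real k * (1 - ?f)"
    by linarith
  have r_nonneg: "0 \<le> (real k * (1 - ?f) - ?S1) / (t - ?S1 - ?S2)"
    using den num_nonneg by simp
  have r_lt_1: "(real k * (1 - ?f) - ?S1) / (t - ?S1 - ?S2) < 1"
    using den num_lt_den by (simp add: divide_less_eq)
  show ?thesis
    unfolding Let_def floor_eq ceiling_eq by (intro conjI den r_nonneg r_lt_1)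
qed

end
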